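(* Let $\alpha,\alpha'$ be Morse–Thue decorated sentences over a finite alphabet $A$. Suppose that $\alpha$ and $\alpha'$ have a common final segment (identical as strings of decorated letters, including decorated stop signs) containing at least $l$ letters from $A$, where $l\ge0$ is an integer, and that $\big||\alpha|-|\alpha'|\big|\le l/2$. Then $|\alpha|=|\alpha'|$.
   Context: Morse–Thue sequence: start from $0$ and repeatedly apply the substitution $0\mapsto01$, $1\mapsto10$, obtaining $0,01,0110,01101001,\dots$; the limit infinite sequence is $(t(m))_{m\ge0}$ with values in $\{0,1\}$. A sentence over $A$ is a finite string in $A\cup\{s\}$ ending with the stop sign $s\notin A$ (words of $A$ each terminated by $s$). Levels of letters: the first letter has level 1 if it is not $s$ and 0 otherwise; each subsequent letter has level one more than the previous letter if it is not $s$, and the same level as the previous letter if it is $s$. The length $|\alpha|$ is the level of the last letter (i.e. the number of letters from $A$). The Morse–Thue decoration of $\alpha$ replaces every letter $x$ (including stop signs) of level $m$ by $(x,t(m))$. *)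

theory Defs
  imports Complex_Main
begin

fun mt_word :: "nat \<Rightarrow> nat list" where
  "mt_word 0 = [0]"
| "mt_word (Suc n) = concat (map (\<lambda>b. if b = 0 then [0, 1] else [1, 0]) (mt_word n))"

text \<open>The limit sequence: mt_word n has length 2^n and is a prefix of mt_word (Suc n);
  the m-th term is read off from mt_word (Suc m), which has length greater than m.\<close>
definition thue_morse :: "nat \<Rightarrow> nat" where
  "thue_morse m = mt_word (Suc m) ! m"

definition sentence :: "'a set \<Rightarrow> 'a \<Rightarrow> 'a list \<Rightarrow> bool" where
  "sentence A s \<alpha> \<longleftrightarrow> \<alpha> \<noteq> [] \<and> last \<alpha> = s \<and> set \<alpha> \<subseteq> A \<union> {s}"

fun levels_from :: "'a \<Rightarrow> nat \<Rightarrow> 'a list \<Rightarrow> nat list" where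
  "levels_from s p [] = []"
| "levels_from s p (x # xs) =
     (let q = (if x = s then p else Suc p) in q # levels_from s q xs)"

definition levels :: "'a \<Rightarrow> 'a list \<Rightarrow> nat list" where
  "levels s \<alpha> = levels_from s 0 \<alpha>"

definition sent_len :: "'a \<Rightarrow> 'a list \<Rightarrow> nat" where
  "sent_len s \<alpha> = last (levels s \<alpha>)"

definition mt_decorate :: "'a \<Rightarrow> 'a list \<Rightarrow> ('a \<times> nat) list" where
  "mt_decorate s \<alpha> = zip \<alpha> (map thue_morse (levels s \<alpha>))"

end

theory Submission
  imports Defs
begin

text \<open>
  On the common final segment \<open>\<gamma>\<close> the two decorations agree, while the letters of \<open>\<gamma>\<close>
  from \<open>A\<close> have levels \<open>q+1, \<dots>, q+c\<close> in one sentence and \<open>q'+1, \<dots>, q'+c\<close> in the other,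
  with \<open>c \<ge> l\<close> and \<open>|\<alpha>| - |\<alpha>'| = q - q'\<close>. Hence the Thue-Morse sequence \<open>t\<close> agrees with its
  shift by \<open>d = |q - q'|\<close> on a window of length \<open>c \<ge> 2d\<close>, i.e. \<open>t\<close> contains a cube \<open>www\<close>
  with \<open>|w| = d\<close> unless \<open>d = 0\<close>. But \<open>t\<close> is cube-free: by \<open>t(2m) = t(m)\<close> a cube of even
  period \<open>2e\<close> yields one of period \<open>e\<close>, and a cube of odd period contradicts
  \<open>t(2m) \<noteq> t(2m+1)\<close>, which forbids three equal consecutive values.
\<close>

fun thue_morse_rec :: "nat \<Rightarrow> nat" where
  "thue_morse_rec n =
     (if n = 0 then 0 else if even n then thue_morse_rec (n div 2) else 1 - thue_morse_rec (n div 2))"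

declare thue_morse_rec.simps [simp del]

lemma thue_morse_rec_le_1: "thue_morse_rec n \<le> 1"
  by (induction n rule: thue_morse_rec.induct) (subst thue_morse_rec.simps, auto)

lemma length_concat_map_const:
  assumes "\<And>x. length (f x) = k"
  shows "length (concat (map f xs)) = k * length xs"
  using assms by (induction xs) auto

lemma nth_concat_map_const:
  assumes "\<And>x. length (f x) = k" and "i < length xs" and "b < k"
  shows "concat (map f xs) ! (k * i + b) = f (xs ! i) ! b"
  using assms(2)
proof (induction xs arbitrary: i)
  case Nil
  then show ?case by simp
next
  case (Cons x xs)
  then show ?case
    using assms(1,3) by (cases i) (auto simp: nth_append algebra_simps)
qed

lemma length_mt_word: "length (mt_word n) = 2 ^ n"
  by (induction n) (simp_all add: length_concat_map_const[where k = 2])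

lemma nth_mt_word: "k < 2 ^ n \<Longrightarrow> mt_word n ! k = thue_morse_rec k"
proof (induction n arbitrary: k)
  case 0
  then show ?case by (simp add: thue_morse_rec.simps)
next
  case (Suc n)
  define f where "f = (\<lambda>b::nat. if b = 0 then [0, 1::nat] else [1, 0])"
  have "k div 2 < length (mt_word n)"
    using Suc.prems by (simp add: length_mt_word less_mult_imp_div_less)
  then have "mt_word (Suc n) ! k = f (thue_morse_rec (k div 2)) ! (k mod 2)"
    using nth_concat_map_const[of f 2 "k div 2" "mt_word n" "k mod 2"] Suc.IH[of "k div 2"]
    by (simp add: f_def length_mt_word)
  also have "\<dots> = thue_morse_rec k"
  proof (cases "even k")
    case True
    then show ?thesis
      using thue_morse_rec.simps[of k] thue_morse_rec_le_1[of "k div 2"]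
      by (auto simp: f_def thue_morse_rec.simps[of 0] even_iff_mod_2_eq_zero)
  next
    case False
    then show ?thesis
      using thue_morse_rec.simps[of k] thue_morse_rec_le_1[of "k div 2"]
      by (auto simp: f_def odd_iff_mod_2_eq_one)
  qed
  finally show ?case .
qed

lemma thue_morse_eq_rec: "thue_morse m = thue_morse_rec m"
proof -
  have "m < 2 ^ Suc m"
    using less_exp[of "Suc m"] by simp
  then show ?thesis
    unfolding thue_morse_def by (rule nth_mt_word)
qed

lemma thue_morse_le_1: "thue_morse m \<le> 1"
  unfolding thue_morse_eq_rec by (rule thue_morse_rec_le_1)

lemma thue_morse_double: "thue_morse (2 * m) = thue_morse m"
  by (simp add: thue_morse_eq_rec thue_morse_rec.simps[of "2 * m"] thue_morse_rec.simps[of 0])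

lemma thue_morse_double_Suc: "thue_morse (Suc (2 * m)) = 1 - thue_morse m"
  by (simp add: thue_morse_eq_rec thue_morse_rec.simps[of "Suc (2 * m)"])

lemma thue_morse_double_neq: "thue_morse (2 * m) \<noteq> thue_morse (Suc (2 * m))"
  using thue_morse_le_1[of m] unfolding thue_morse_double thue_morse_double_Suc by arith

lemma thue_morse_no_triple:
  "\<not> (thue_morse i = thue_morse (i + 1) \<and> thue_morse (i + 1) = thue_morse (i + 2))"
proof (cases "even i")
  case True
  then obtain m where "i = 2 * m" by blast
  then show ?thesis using thue_morse_double_neq[of m] by auto
next
  case False
  then obtain m where "i + 1 = 2 * m" by (metis even_Suc Suc_eq_plus1 evenE)
  then show ?thesis using thue_morse_double_neq[of m] by (auto simp: numeral_2_eq_2)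
qed

text \<open>The factor of \<open>t\<close> of length \<open>3d\<close> starting at \<open>i\<close> is a cube \<open>www\<close>.\<close>
definition thue_morse_cube :: "nat \<Rightarrow> nat \<Rightarrow> bool" where
  "thue_morse_cube i d \<longleftrightarrow> (\<forall>j < 2 * d. thue_morse (i + j) = thue_morse (i + j + d))"

lemma thue_morse_cube_halve:
  assumes "thue_morse_cube i (2 * e)"
  shows "thue_morse_cube ((i + 1) div 2) e"
  unfolding thue_morse_cube_def
proof (intro allI impI)
  fix j assume "j < 2 * e"
  define m where "m = (i + 1) div 2 + j"
  have "i \<le> 2 * m" and "2 * m - i < 2 * (2 * e)"
    using \<open>j < 2 * e\<close> by (auto simp: m_def)
  then have "thue_morse (2 * m) = thue_morse (2 * (m + e))"
    using assms[unfolded thue_morse_cube_def, rule_format, of "2 * m - i"]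
    by (simp add: algebra_simps)
  then show "thue_morse m = thue_morse (m + e)"
    by (simp only: thue_morse_double)
qed

lemma thue_morse_cube_odd_step:
  assumes cube: "thue_morse_cube i (Suc (2 * e))"
    and "i \<le> 2 * m" and "2 * m + 1 < i + 2 * Suc (2 * e)"
  shows "thue_morse (m + e) = thue_morse (Suc (m + e))"
proof -
  \<comment> \<open>the odd period moves the pair \<open>2m, 2m+1\<close> onto \<open>2(m+e)+1, 2(m+e+1)\<close>\<close>
  have "thue_morse (2 * m) = thue_morse (Suc (2 * (m + e)))"
    and "thue_morse (Suc (2 * m)) = thue_morse (2 * Suc (m + e))"
    using cube[unfolded thue_morse_cube_def, rule_format, of "2 * m - i"]
      cube[unfolded thue_morse_cube_def, rule_format, of "2 * m + 1 - i"] assms(2,3)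
    by (simp_all add: algebra_simps)
  then have "thue_morse m = 1 - thue_morse (m + e)"
    and "1 - thue_morse m = thue_morse (Suc (m + e))"
    by (simp_all only: thue_morse_double thue_morse_double_Suc)
  then show ?thesis
    using thue_morse_le_1[of m] thue_morse_le_1[of "m + e"] by arith
qed

lemma thue_morse_no_odd_cube: "\<not> thue_morse_cube i (Suc (2 * e))"
proof
  assume cube: "thue_morse_cube i (Suc (2 * e))"
  show False
  proof (cases "e = 0")
    case True
    then show False
      using cube thue_morse_no_triple[of i] by (auto simp: thue_morse_cube_def add.commute)
  next
    case False
    define m where "m = (i + 1) div 2"
    have "thue_morse (m + e) = thue_morse (Suc (m + e))"
      and "thue_morse (Suc (m + e)) = thue_morse (Suc (Suc (m + e)))"
      using thue_morse_cube_odd_step[OF cube, of m] thue_morse_cube_odd_step[OF cube, of "Suc m"]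
        False by (auto simp: m_def)
    then show False
      using thue_morse_no_triple[of "m + e"] by simp
  qed
qed

lemma thue_morse_cube_free: "0 < d \<Longrightarrow> \<not> thue_morse_cube i d"
proof (induction d arbitrary: i rule: less_induct)
  case (less d)
  show ?case
  proof (cases "even d")
    case True
    then obtain e where "d = 2 * e" by blast
    then show ?thesis
      using less thue_morse_cube_halve[of i e] by auto
  next
    case False
    then obtain e where "d = Suc (2 * e)" by (metis oddE Suc_eq_plus1)
    then show ?thesis using thue_morse_no_odd_cube by simp
  qed
qed

lemma thue_morse_shifted_factor_eq:
  assumes agree: "\<forall>r \<in> {0<..c}. thue_morse (p + r) = thue_morse (q + r)"
    and "p \<le> q" and "2 * (q - p) \<le> c"
  shows "p = q"
proof (rule ccontr)
  assume "p \<noteq> q"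
  have "thue_morse_cube (Suc p) (q - p)"
    unfolding thue_morse_cube_def
  proof (intro allI impI)
    fix j assume "j < 2 * (q - p)"
    then have "Suc j \<in> {0<..c}"
      using assms(3) by simp
    then have "thue_morse (p + Suc j) = thue_morse (q + Suc j)"
      using agree by blast
    then show "thue_morse (Suc p + j) = thue_morse (Suc p + j + (q - p))"
      using \<open>p \<le> q\<close> by (simp add: ac_simps)
  qed
  then show False
    using thue_morse_cube_free \<open>p \<le> q\<close> \<open>p \<noteq> q\<close> by simp
qed

definition letter_count :: "'a \<Rightarrow> 'a list \<Rightarrow> nat" where
  "letter_count s xs = length (filter (\<lambda>x. x \<noteq> s) xs)"

lemma length_levels_from [simp]: "length (levels_from s p xs) = length xs"
  by (induction xs arbitrary: p) (auto simp: Let_def)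

lemma levels_from_eq_Nil_iff [simp]: "levels_from s p xs = [] \<longleftrightarrow> xs = []"
  using length_levels_from length_0_conv by metis

lemma levels_from_shift: "levels_from s (q + p) xs = map ((+) q) (levels_from s p xs)"
proof (induction xs arbitrary: p)
  case Nil
  then show ?case by simp
next
  case (Cons x xs)
  then show ?case
    using Cons.IH[of "Suc p"] by (simp add: Let_def)
qed

lemma levels_from_append:
  "levels_from s p (xs @ ys) = levels_from s p xs @ levels_from s (p + letter_count s xs) ys"
  by (induction xs arbitrary: p) (auto simp: Let_def letter_count_def)

lemma last_levels_from:
  "xs \<noteq> [] \<Longrightarrow> last (levels_from s p xs) = p + letter_count s xs"
proof (induction xs arbitrary: p)
  case Nil
  then show ?case by simp
next
  case (Cons x xs)
  then show ?case
    by (cases "xs = []") (auto simp: Let_def letter_count_def)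
qed

lemma levels_from_covers: "{p<..p + letter_count s xs} \<subseteq> set (levels_from s p xs)"
proof (induction xs arbitrary: p)
  case Nil
  then show ?case by (simp add: letter_count_def)
next
  case (Cons x xs)
  show ?case
  proof (cases "x = s")
    case True
    then show ?thesis
      using Cons.IH[of p] by (simp add: letter_count_def subset_insertI2)
  next
    case False
    then have "{p<..p + letter_count s (x # xs)} = insert (Suc p) {Suc p<..Suc p + letter_count s xs}"
      by (auto simp: letter_count_def)
    then show ?thesis
      using Cons.IH[of "Suc p"] False by auto
  qed
qed

lemma map_levels_from_eq_imp:
  assumes "map f (levels_from s p xs) = map f (levels_from s q xs)"
    and "r \<in> {0<..letter_count s xs}"
  shows "f (p + r) = f (q + r)"
proof -
  have "r \<in> set (levels_from s 0 xs)"
    using levels_from_covers[of 0 s xs] assms(2) by auto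
  moreover have "map (f \<circ> (+) p) (levels_from s 0 xs) = map (f \<circ> (+) q) (levels_from s 0 xs)"
    using assms(1) levels_from_shift[of s p 0 xs] levels_from_shift[of s q 0 xs] by simp
  ultimately show ?thesis
    unfolding map_eq_conv by simp
qed

lemma sent_len_eq_letter_count: "\<alpha> \<noteq> [] \<Longrightarrow> sent_len s \<alpha> = letter_count s \<alpha>"
  by (simp add: sent_len_def levels_def last_levels_from)

lemma mt_decorate_append:
  "mt_decorate s (xs @ ys) =
     mt_decorate s xs @ zip ys (map thue_morse (levels_from s (letter_count s xs) ys))"
  by (simp add: mt_decorate_def levels_def levels_from_append)

lemma mt_decorate_suffix:
  assumes "mt_decorate s \<alpha> = u @ \<beta>"
  obtains \<delta> where "\<alpha> = \<delta> @ map fst \<beta>"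
    and "map snd \<beta> = map thue_morse (levels_from s (letter_count s \<delta>) (map fst \<beta>))"
proof -
  define \<delta> where "\<delta> = take (length u) \<alpha>"
  define \<gamma> where "\<gamma> = drop (length u) \<alpha>"
  have "length u \<le> length \<alpha>"
    using arg_cong[OF assms, of length] by (simp add: mt_decorate_def levels_def)
  then have "length (mt_decorate s \<delta>) = length u"
    by (simp add: \<delta>_def mt_decorate_def levels_def)
  moreover have "mt_decorate s \<alpha> =
      mt_decorate s \<delta> @ zip \<gamma> (map thue_morse (levels_from s (letter_count s \<delta>) \<gamma>))"
    using mt_decorate_append[of s \<delta> \<gamma>] by (simp add: \<delta>_def \<gamma>_def)
  ultimately have "\<beta> = zip \<gamma> (map thue_morse (levels_from s (letter_count s \<delta>) \<gamma>))"
    using assms by (metis append_eq_append_conv)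
  then have "map fst \<beta> = \<gamma>" and "map snd \<beta> = map thue_morse (levels_from s (letter_count s \<delta>) \<gamma>)"
    by simp_all
  moreover have "\<alpha> = \<delta> @ \<gamma>"
    by (simp add: \<delta>_def \<gamma>_def)
  ultimately show thesis
    using that by simp
qed

lemma length_filter_letters_eq_letter_count:
  assumes "set (map fst \<beta>) \<subseteq> A \<union> {s}" and "s \<notin> A"
  shows "length (filter (\<lambda>(x, b). x \<in> A) \<beta>) = letter_count s (map fst \<beta>)"
proof -
  have "\<forall>x \<in> set (map fst \<beta>). x \<in> A \<longleftrightarrow> x \<noteq> s"
    using assms by auto
  then show ?thesis
    unfolding letter_count_def by (simp add: filter_map comp_def case_prod_beta cong: filter_cong)
qed

lemma sent_len_eq_if_common_decorated_suffix:
  assumes dec: "mt_decorate s \<alpha> = u @ \<beta>" and dec': "mt_decorate s \<alpha>' = u' @ \<beta>"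
    and close: "2 * (sent_len s \<alpha> - sent_len s \<alpha>') \<le> letter_count s (map fst \<beta>)"
      "2 * (sent_len s \<alpha>' - sent_len s \<alpha>) \<le> letter_count s (map fst \<beta>)"
  shows "sent_len s \<alpha> = sent_len s \<alpha>'"
proof (cases "\<beta> = []")
  case True
  then show ?thesis
    using close by (simp add: letter_count_def)
next
  case False
  define \<gamma> c where "\<gamma> = map fst \<beta>" and "c = letter_count s \<gamma>"
  obtain \<delta> where \<alpha>: "\<alpha> = \<delta> @ \<gamma>"
    and lev: "map snd \<beta> = map thue_morse (levels_from s (letter_count s \<delta>) \<gamma>)"
    using mt_decorate_suffix[OF dec] unfolding \<gamma>_def by blast
  obtain \<delta>' where \<alpha>': "\<alpha>' = \<delta>' @ \<gamma>"
    and lev': "map snd \<beta> = map thue_morse (levels_from s (letter_count s \<delta>') \<gamma>)"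
    using mt_decorate_suffix[OF dec'] unfolding \<gamma>_def by blast
  define q q' where "q = letter_count s \<delta>" and "q' = letter_count s \<delta>'"
  have len: "sent_len s \<alpha> = q + c" "sent_len s \<alpha>' = q' + c"
    using False by (simp_all add: \<alpha> \<alpha>' \<gamma>_def q_def q'_def c_def sent_len_eq_letter_count
        letter_count_def)
  have agree: "\<forall>r \<in> {0<..c}. thue_morse (q + r) = thue_morse (q' + r)"
    using map_levels_from_eq_imp[of thue_morse s q \<gamma> q'] lev lev'
    by (simp add: q_def q'_def c_def)
  moreover have "\<forall>r \<in> {0<..c}. thue_morse (q' + r) = thue_morse (q + r)"
    using agree by auto
  moreover have "2 * (q' - q) \<le> c" and "2 * (q - q') \<le> c"
    using close by (simp_all add: len c_def \<gamma>_def)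
  ultimately have "q = q'"
    using thue_morse_shifted_factor_eq[of c q q'] thue_morse_shifted_factor_eq[of c q' q]
      nat_le_linear[of q q'] by blast
  then show ?thesis
    using len by simp
qed

theorem mainTheorem18:
  fixes A :: "'a set" and s :: 'a and \<alpha> \<alpha>' :: "'a list" and l :: nat
  assumes "finite A" and "s \<notin> A"
    and "sentence A s \<alpha>" and "sentence A s \<alpha>'"
    and "\<exists>\<beta> u u'. mt_decorate s \<alpha> = u @ \<beta> \<and> mt_decorate s \<alpha>' = u' @ \<beta>
                  \<and> l \<le> length (filter (\<lambda>(x, b). x \<in> A) \<beta>)"
    and "\<bar>real (sent_len s \<alpha>) - real (sent_len s \<alpha>')\<bar> \<le> real l / 2"
  shows "sent_len s \<alpha> = sent_len s \<alpha>'"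
proof -
  obtain \<beta> u u' where dec: "mt_decorate s \<alpha> = u @ \<beta>" and dec': "mt_decorate s \<alpha>' = u' @ \<beta>"
    and l_le: "l \<le> length (filter (\<lambda>(x, b). x \<in> A) \<beta>)"
    using assms(5) by blast
  obtain \<delta> where "\<alpha> = \<delta> @ map fst \<beta>"
    using mt_decorate_suffix[OF dec] by blast
  then have "set (map fst \<beta>) \<subseteq> A \<union> {s}"
    using assms(3) by (auto simp: sentence_def)
  then have "l \<le> letter_count s (map fst \<beta>)"
    using l_le assms(2) by (simp add: length_filter_letters_eq_letter_count)
  moreover have "real (2 * (sent_len s \<alpha> - sent_len s \<alpha>')) \<le> real l"
    and "real (2 * (sent_len s \<alpha>' - sent_len s \<alpha>)) \<le> real l"
    using assms(6) by (cases "sent_len s \<alpha> \<le> sent_len s \<alpha>'"; simp)+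
  ultimately show ?thesis
    by (intro sent_len_eq_if_common_decorated_suffix[OF dec dec']) linarith+
qed

end
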